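(* Consider classical propositional logic over a set $V$ of propositional variables, and suppose that for every disjoint cover $X',X''$ of $V$, the relation $\preceq$ on $(\Pi V\times\Pi V)\cup(\Pi X'\times\Pi X')\cup(\Pi X''\times\Pi X'')$ is a smooth (generalized) Hamming relation. Define $\beta\mathrel{|\!\sim}\gamma$ iff $\mu(M(\beta))\subseteq M(\gamma)$. Then for all formulas $\phi,\psi$ with $\phi\mathrel{|\!\sim}\psi$ there is a formula $\alpha$ with $var(\alpha)\subseteq var(\phi)\cap var(\psi)$ such that $\phi\vdash\alpha$ and $\alpha\mathrel{|\!\sim}\psi$.
   Context: For $Y\subseteq V$, $\Pi Y$ is the set of assignments $Y\to\{\mathrm{TRUE},\mathrm{FALSE}\}$; $M(\phi)\subseteq\Pi V$ is the set of models of $\phi$; $var(\phi)$ is the set of variables occurring in $\phi$. For $\sigma\in\Pi V$ write $\sigma=\sigma'\circ\sigma''$ with $\sigma'=\sigma\upharpoonright X'$, $\sigma''=\sigma\upharpoonright X''$. $\preceq$ is a (generalized) Hamming relation for the cover $X',X''$ iff $\preceq$ is reflexive and for all $\sigma,\tau\in\Pi V$: $\sigma\preceq\tau\iff(\sigma'\preceq\tau'$ and $\sigma''\preceq\tau'')$. $x\prec y$ means $x\preceq y$ and $x\neq y$. For a set $A$ of (partial) models, $\mu(A):=\{x\in A:\neg\exists x'\in A.\,x'\prec x\}$; $\preceq$ is smooth iff for every such $A$ and $x\in A-\mu(A)$ there is $x'\in\mu(A)$ with $x'\prec x$. *)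

theory Defs
  imports Main
begin

text \<open>Propositional formulas over variables of type 'v (the whole type 'v plays the role of V).\<close>
datatype 'v form =
    Var 'v
  | Bot
  | Neg "'v form"
  | Conj "'v form" "'v form"
  | Disj "'v form" "'v form"
  | Imp "'v form" "'v form"

primrec vars :: "'v form \<Rightarrow> 'v set" where
  "vars (Var v) = {v}"
| "vars Bot = {}"
| "vars (Neg a) = vars a"
| "vars (Conj a b) = vars a \<union> vars b"
| "vars (Disj a b) = vars a \<union> vars b"
| "vars (Imp a b) = vars a \<union> vars b"

definition Pi_asg :: "'v set \<Rightarrow> ('v \<rightharpoonup> bool) set" where
  "Pi_asg X = {s. dom s = X}"

primrec eval :: "('v \<rightharpoonup> bool) \<Rightarrow> 'v form \<Rightarrow> bool" where
  "eval s (Var v) = (s v = Some True)"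
| "eval s Bot = False"
| "eval s (Neg a) = (\<not> eval s a)"
| "eval s (Conj a b) = (eval s a \<and> eval s b)"
| "eval s (Disj a b) = (eval s a \<or> eval s b)"
| "eval s (Imp a b) = (eval s a \<longrightarrow> eval s b)"

definition Mod :: "'v form \<Rightarrow> ('v \<rightharpoonup> bool) set" where
  "Mod a = {s \<in> Pi_asg UNIV. eval s a}"

definition entails :: "'v form \<Rightarrow> 'v form \<Rightarrow> bool" where
  "entails a b \<longleftrightarrow> Mod a \<subseteq> Mod b"

definition strict :: "('a \<Rightarrow> 'a \<Rightarrow> bool) \<Rightarrow> 'a \<Rightarrow> 'a \<Rightarrow> bool" where
  "strict R x y \<longleftrightarrow> R x y \<and> x \<noteq> y"

definition mu :: "('a \<Rightarrow> 'a \<Rightarrow> bool) \<Rightarrow> 'a set \<Rightarrow> 'a set" where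
  "mu R A = {x \<in> A. \<not> (\<exists>x'\<in>A. strict R x' x)}"

definition hamming :: "(('v \<rightharpoonup> bool) \<Rightarrow> ('v \<rightharpoonup> bool) \<Rightarrow> bool) \<Rightarrow> 'v set \<Rightarrow> 'v set \<Rightarrow> bool" where
  "hamming R X1 X2 \<longleftrightarrow>
     (\<forall>s \<in> Pi_asg UNIV \<union> Pi_asg X1 \<union> Pi_asg X2. R s s) \<and>
     (\<forall>s \<in> Pi_asg UNIV. \<forall>t \<in> Pi_asg UNIV.
        R s t \<longleftrightarrow> (R (s |` X1) (t |` X1) \<and> R (s |` X2) (t |` X2)))"

definition smooth_on :: "(('v \<rightharpoonup> bool) \<Rightarrow> ('v \<rightharpoonup> bool) \<Rightarrow> bool) \<Rightarrow> 'v set \<Rightarrow> bool" where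
  "smooth_on R X \<longleftrightarrow>
     (\<forall>A \<subseteq> Pi_asg X. \<forall>x \<in> A - mu R A. \<exists>x' \<in> mu R A. strict R x' x)"

definition nm_entails :: "(('v \<rightharpoonup> bool) \<Rightarrow> ('v \<rightharpoonup> bool) \<Rightarrow> bool) \<Rightarrow> 'v form \<Rightarrow> 'v form \<Rightarrow> bool" where
  "nm_entails R b c \<longleftrightarrow> mu R (Mod b) \<subseteq> Mod c"

end

theory Submission
  imports Defs
begin

text \<open>Take for \<open>\<alpha>\<close> a formula over the shared variables whose models are exactly the
  assignments agreeing with some model of \<open>\<phi>\<close> on those variables; then \<open>\<phi> \<turnstile> \<alpha>\<close>.
  Let \<open>s\<close> be a minimal model of \<open>\<alpha>\<close>, witnessed by a model \<open>t\<close> of \<open>\<phi>\<close>. Gluing the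
  \<open>var(\<psi>)\<close>-part of \<open>s\<close> to the rest of \<open>t\<close> gives a model \<open>u\<close> of \<open>\<phi>\<close>; by smoothness
  some minimal model \<open>u'\<close> of \<open>\<phi>\<close> lies below \<open>u\<close>, and \<open>u' \<Turnstile> \<psi>\<close>. Gluing the
  \<open>var(\<psi>)\<close>-part of \<open>u'\<close> to the rest of \<open>s\<close> gives a model of \<open>\<alpha>\<close> which, by the
  Hamming property for the cover \<open>var(\<psi>), V - var(\<psi>)\<close>, lies below \<open>s\<close>. Minimality of
  \<open>s\<close> forces equality, so \<open>s\<close> agrees with \<open>u'\<close> on \<open>var(\<psi>)\<close> and satisfies \<open>\<psi>\<close>.\<close>

lemma eval_cong: "(\<And>v. v \<in> vars a \<Longrightarrow> s v = t v) \<Longrightarrow> eval s a = eval t a"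
  by (induction a) auto

lemma finite_vars: "finite (vars a)"
  by (induction a) auto

lemma Pi_asg_UNIV_iff: "s \<in> Pi_asg UNIV \<longleftrightarrow> (\<forall>v. s v \<noteq> None)"
  by (auto simp: Pi_asg_def)

lemma Pi_asg_UNIV_if:
  "s \<in> Pi_asg UNIV \<Longrightarrow> t \<in> Pi_asg UNIV \<Longrightarrow> (\<lambda>v. if v \<in> X then s v else t v) \<in> Pi_asg UNIV"
  by (simp add: Pi_asg_UNIV_iff)

lemma restrict_map_in_Pi_asg: "s \<in> Pi_asg UNIV \<Longrightarrow> s |` X \<in> Pi_asg X"
  by (auto simp: Pi_asg_def)

definition cylinder :: "'v set \<Rightarrow> ('v \<rightharpoonup> bool) set \<Rightarrow> ('v \<rightharpoonup> bool) set" where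
  "cylinder I A = {s \<in> Pi_asg UNIV. \<exists>t \<in> A. \<forall>v \<in> I. s v = t v}"

lemma cylinder_empty:
  "cylinder {} A = (if A = {} then {} else Pi_asg UNIV)"
  by (auto simp: cylinder_def)

lemma Pi_asg_UNIV_not_True:
  "s \<in> Pi_asg UNIV \<Longrightarrow> s x \<noteq> Some True \<longleftrightarrow> s x = Some False"
  by (cases "s x") (auto simp: Pi_asg_def)

lemma cylinder_insert:
  assumes "s \<in> Pi_asg UNIV"
  shows "s \<in> cylinder (insert x I) A \<longleftrightarrow>
           (s x = Some True \<and> s \<in> cylinder I {t \<in> A. t x = Some True}) \<or>
           (s x = Some False \<and> s \<in> cylinder I {t \<in> A. t x = Some False})"
  using assms Pi_asg_UNIV_not_True[OF assms, of x]
  unfolding cylinder_def by (smt (verit) insert_iff mem_Collect_eq)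

lemma cylinder_definable:
  assumes "finite I"
  shows "\<exists>\<alpha>. vars \<alpha> \<subseteq> I \<and> Mod \<alpha> = cylinder I A"
  using assms
proof (induction I arbitrary: A rule: finite_induct)
  case empty
  have "Mod Bot = {}" "Mod (Neg Bot) = Pi_asg UNIV"
    by (auto simp: Mod_def)
  then show ?case
    by (cases "A = {}") (auto simp: cylinder_empty intro: exI[of _ Bot] exI[of _ "Neg Bot"])
next
  case (insert x I)
  obtain \<alpha>T where \<alpha>T: "vars \<alpha>T \<subseteq> I" "Mod \<alpha>T = cylinder I {t \<in> A. t x = Some True}"
    using insert.IH by blast
  obtain \<alpha>F where \<alpha>F: "vars \<alpha>F \<subseteq> I" "Mod \<alpha>F = cylinder I {t \<in> A. t x = Some False}"
    using insert.IH by blast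
  let ?\<alpha> = "Disj (Conj (Var x) \<alpha>T) (Conj (Neg (Var x)) \<alpha>F)"
  have "s \<in> Mod ?\<alpha> \<longleftrightarrow> s \<in> cylinder (insert x I) A" for s
  proof (cases "s \<in> Pi_asg UNIV")
    case True
    then show ?thesis
      using \<alpha>T(2) \<alpha>F(2) Pi_asg_UNIV_not_True[OF True, of x]
      by (auto simp: cylinder_insert Mod_def)
  qed (simp add: Mod_def cylinder_def)
  moreover have "vars ?\<alpha> \<subseteq> insert x I"
    using \<alpha>T(1) \<alpha>F(1) by auto
  ultimately show ?case by blast
qed

lemma Mod_subset_cylinder: "Mod \<phi> \<subseteq> cylinder I (Mod \<phi>)"
  by (auto simp: cylinder_def Mod_def)

lemma hamming_refl: "hamming R X1 X2 \<Longrightarrow> s \<in> Pi_asg UNIV \<Longrightarrow> R s s"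
  by (simp add: hamming_def)

lemma hamming_splice_le:
  assumes ham: "hamming R X1 X2" and disj: "X1 \<inter> X2 = {}"
    and tot: "u' \<in> Pi_asg UNIV" "u \<in> Pi_asg UNIV" "s \<in> Pi_asg UNIV"
    and le: "R u' u" and agree: "\<forall>v \<in> X1. u v = s v"
  shows "R (\<lambda>v. if v \<in> X1 then u' v else s v) s"
proof -
  let ?s' = "\<lambda>v. if v \<in> X1 then u' v else s v"
  have s'_tot: "?s' \<in> Pi_asg UNIV"
    using tot by (simp add: Pi_asg_UNIV_if)
  have "R (u' |` X1) (u |` X1)"
    using ham tot le by (simp add: hamming_def)
  moreover have "?s' |` X1 = u' |` X1" "u |` X1 = s |` X1" "?s' |` X2 = s |` X2"
    using agree disj by (auto simp: restrict_map_def fun_eq_iff)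
  moreover have "R (s |` X2) (s |` X2)"
    using ham restrict_map_in_Pi_asg[OF tot(3)] by (simp add: hamming_def)
  ultimately show ?thesis
    using ham s'_tot tot(3) by (simp add: hamming_def)
qed

lemma smooth_on_exists_mu_le:
  assumes "smooth_on R X" "A \<subseteq> Pi_asg X" "x \<in> A" "R x x"
  shows "\<exists>x' \<in> mu R A. R x' x"
proof (cases "x \<in> mu R A")
  case False
  then show ?thesis
    using assms unfolding smooth_on_def strict_def by blast
qed (use assms in blast)

lemma mu_cylinder_subset_Mod:
  assumes ham: "hamming R (vars \<psi>) (- vars \<psi>)" and smooth: "smooth_on R UNIV"
    and nm: "nm_entails R \<phi> \<psi>"
    and I: "vars \<phi> \<inter> vars \<psi> \<subseteq> I" "I \<subseteq> vars \<psi>"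
  shows "mu R (cylinder I (Mod \<phi>)) \<subseteq> Mod \<psi>"
proof
  fix s assume s_mu: "s \<in> mu R (cylinder I (Mod \<phi>))"
  then have s_cyl: "s \<in> cylinder I (Mod \<phi>)" and s_tot: "s \<in> Pi_asg UNIV"
    by (auto simp: mu_def cylinder_def)
  obtain t where t: "t \<in> Mod \<phi>" "\<forall>v \<in> I. s v = t v"
    using s_cyl by (auto simp: cylinder_def)
  define u where "u = (\<lambda>v. if v \<in> vars \<psi> then s v else t v)"
  have u_tot: "u \<in> Pi_asg UNIV"
    using s_tot t(1) unfolding u_def Mod_def by (simp add: Pi_asg_UNIV_if)
  have "eval u \<phi> = eval t \<phi>"
    using t(2) I(1) by (intro eval_cong) (auto simp: u_def)
  then have u_Mod: "u \<in> Mod \<phi>"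
    using t(1) u_tot by (simp add: Mod_def)
  have "Mod \<phi> \<subseteq> Pi_asg UNIV"
    by (auto simp: Mod_def)
  then obtain u' where u': "u' \<in> mu R (Mod \<phi>)" "R u' u"
    using smooth_on_exists_mu_le[of R UNIV "Mod \<phi>" u] smooth u_Mod hamming_refl[OF ham u_tot]
    by blast
  have u'_Mod: "u' \<in> Mod \<phi>" and u'_tot: "u' \<in> Pi_asg UNIV"
    using u'(1) by (auto simp: mu_def Mod_def)
  have u'_\<psi>: "eval u' \<psi>"
    using u'(1) nm by (auto simp: nm_entails_def Mod_def)
  define s' where "s' = (\<lambda>v. if v \<in> vars \<psi> then u' v else s v)"
  have "R s' s"
    unfolding s'_def using hamming_splice_le[of R "vars \<psi>" "- vars \<psi>" u' u s]
      ham u'_tot u_tot s_tot u'(2) by (simp add: u_def)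
  moreover have "s' \<in> cylinder I (Mod \<phi>)"
  proof -
    have "\<forall>v \<in> I. s' v = u' v"
      using I(2) by (auto simp: s'_def)
    then show ?thesis
      using u'_Mod u'_tot s_tot unfolding cylinder_def s'_def by (blast intro: Pi_asg_UNIV_if)
  qed
  ultimately have "s' = s"
    using s_mu by (auto simp: mu_def strict_def)
  moreover have "eval s' \<psi> = eval u' \<psi>"
    by (intro eval_cong) (simp add: s'_def)
  ultimately show "s \<in> Mod \<psi>"
    using u'_\<psi> s_tot by (simp add: Mod_def)
qed

theorem corollary4p11:
  fixes R :: "('v \<rightharpoonup> bool) \<Rightarrow> ('v \<rightharpoonup> bool) \<Rightarrow> bool"
  assumes "\<forall>X1 X2. X1 \<union> X2 = UNIV \<and> X1 \<inter> X2 = {} \<longrightarrow>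
             hamming R X1 X2 \<and> smooth_on R UNIV \<and> smooth_on R X1 \<and> smooth_on R X2"
  shows "\<forall>\<phi> \<psi>. nm_entails R \<phi> \<psi> \<longrightarrow>
           (\<exists>\<alpha>. vars \<alpha> \<subseteq> vars \<phi> \<inter> vars \<psi> \<and> entails \<phi> \<alpha> \<and> nm_entails R \<alpha> \<psi>)"
proof (intro allI impI)
  fix \<phi> \<psi> :: "'v form"
  assume nm: "nm_entails R \<phi> \<psi>"
  let ?I = "vars \<phi> \<inter> vars \<psi>"
  obtain \<alpha> where \<alpha>: "vars \<alpha> \<subseteq> ?I" "Mod \<alpha> = cylinder ?I (Mod \<phi>)"
    using cylinder_definable[of ?I] finite_vars by blast
  have "hamming R (vars \<psi>) (- vars \<psi>)" "smooth_on R UNIV"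
    using assms[rule_format, of "vars \<psi>" "- vars \<psi>"] by auto
  then have "nm_entails R \<alpha> \<psi>"
    using mu_cylinder_subset_Mod[OF _ _ nm, of ?I] \<alpha>(2) by (simp add: nm_entails_def)
  moreover have "entails \<phi> \<alpha>"
    using \<alpha>(2) Mod_subset_cylinder by (simp add: entails_def)
  ultimately show "\<exists>\<alpha>. vars \<alpha> \<subseteq> ?I \<and> entails \<phi> \<alpha> \<and> nm_entails R \<alpha> \<psi>"
    using \<alpha>(1) by blast
qed

end
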